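(* Let $P$ be an integer and write $U_j=U_j(P,Q)$ for the Lucas sequence of the first kind. For integers $A,B$ consider the equation $\sigma_2(n)-n^2=An+B$ in positive integers $n$. Then every solution $n$ with $n>(|A|+|B|)^3$ has the following form (so all solutions not of this form are among the finitely many $n\le(|A|+|B|)^3$, which can be computed): (1) if $A=P^2+2$ and $B=-P^2+1$: $n=U_{2k-1}(P,-1)\,U_{2k+1}(P,-1)$ for some integer $k\ge 1$, with $U_{2k-1}(P,-1)$ and $U_{2k+1}(P,-1)$ both prime; (2) if $A=P^2+2$ and $B=P^2+1$: $n=U_{2k}(P,-1)\,U_{2k+2}(P,-1)$ for some integer $k\ge 0$, with $U_{2k}(P,-1)$ and $U_{2k+2}(P,-1)$ both prime; (3) if $A=P^2-2$ and $B=P^2+1$: $n=U_{k-1}(P,1)\,U_{k+1}(P,1)$ for some integer $k\ge 1$, with $U_{k-1}(P,1)$ and $U_{k+1}(P,1)$ both prime.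
   Context: For a positive integer $n$ and $k\ge 0$, $\sigma_k(n)=\sum_{d\mid n,\ d>0} d^k$. For integers $P,Q$, the Lucas sequences are defined for $j\ge 0$ by $U_0(P,Q)=0$, $U_1(P,Q)=1$, $U_j(P,Q)=P\,U_{j-1}(P,Q)-Q\,U_{j-2}(P,Q)$ for $j>1$, and $V_0(P,Q)=2$, $V_1(P,Q)=P$, $V_j(P,Q)=P\,V_{j-1}(P,Q)-Q\,V_{j-2}(P,Q)$ for $j>1$. *)

theory Defs
  imports "HOL-Computational_Algebra.Primes"
begin

definition sigma :: "nat \<Rightarrow> nat \<Rightarrow> nat" where
  "sigma k n = (\<Sum>d | d dvd n \<and> d > 0. d ^ k)"

fun lucasU :: "int \<Rightarrow> int \<Rightarrow> nat \<Rightarrow> int" where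
  "lucasU P Q 0 = 0"
| "lucasU P Q (Suc 0) = 1"
| "lucasU P Q (Suc (Suc j)) = P * lucasU P Q (Suc j) - Q * lucasU P Q j"

fun lucasV :: "int \<Rightarrow> int \<Rightarrow> nat \<Rightarrow> int" where
  "lucasV P Q 0 = 2"
| "lucasV P Q (Suc 0) = P"
| "lucasV P Q (Suc (Suc j)) = P * lucasV P Q (Suc j) - Q * lucasV P Q j"

end

theory Submission
  imports Defs
begin

text \<open>If \<open>n\<close> has three factors \<open>\<ge> 2\<close>, the cofactor \<open>c\<close> of the least one, \<open>x\<close>, is a divisor with
  \<open>x\<^sup>2 \<le> c\<close>, so \<open>1 + c\<^sup>2 \<le> \<sigma>\<^sub>2(n) - n\<^sup>2 = A n + B \<le> K x c\<close> with \<open>K = |A| + |B|\<close>; hence \<open>x\<^sup>2 \<le> c < K x\<close>,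
  \<open>x < K\<close> and \<open>n = x c < K\<^sup>3\<close>. A larger solution is therefore a prime, a prime square, or a product
  \<open>p q\<close> of primes \<open>p < q\<close> with \<open>p\<^sup>2 + q\<^sup>2 + 1 = A p q + B\<close>; in all three families the first two shapes give
  linear equations without admissible solutions.
  In the first family this reads \<open>p\<^sup>2 + q\<^sup>2 - (P\<^sup>2 + 2) p q = -P\<^sup>2\<close>, whose positive solutions are, by Vieta
  jumping, the pairs of consecutive odd-indexed terms of \<open>U(P, -1)\<close>. In the other two it reads
  \<open>(q \<mp> p)\<^sup>2 = P\<^sup>2 (p q + 1)\<close>, so \<open>p q + 1\<close> is a square, which for primes forces \<open>q = p + 2\<close>; this is
  impossible in the second family and forces \<open>P = \<plusminus>2\<close>, where \<open>U\<^sub>k(P, 1) = \<plusminus>k\<close>, in the third.\<close>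

lemma lucasU_add4:
  "lucasU P Q (j + 4) = (P\<^sup>2 - 2 * Q) * lucasU P Q (j + 2) - Q\<^sup>2 * lucasU P Q j"
proof -
  have "lucasU P Q (j + 4) = P * lucasU P Q (j + 3) - Q * lucasU P Q (j + 2)"
    and "lucasU P Q (j + 3) = P * lucasU P Q (j + 2) - Q * lucasU P Q (j + 1)"
    and "lucasU P Q (j + 2) = P * lucasU P Q (j + 1) - Q * lucasU P Q j"
    by (simp_all add: numeral_eq_Suc)
  then show ?thesis
    by (simp add: algebra_simps power2_eq_square)
qed

lemma lucasU_repeated_root: "lucasU (2 * s) (s\<^sup>2) k = int k * s ^ (k - 1)"
proof (induction "2 * s" "s\<^sup>2" k rule: lucasU.induct)
  case (3 j)
  then show ?case
    by (cases j) (simp_all add: algebra_simps power2_eq_square)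
qed simp_all

lemma lucasU_square_four:
  assumes "P\<^sup>2 = 4"
  shows "\<bar>lucasU P 1 k\<bar> = int k" and "lucasU P 1 k * lucasU P 1 (k + 2) = int k * int (k + 2)"
proof -
  have "(P - 2) * (P + 2) = 0"
    using assms by (simp add: algebra_simps power2_eq_square)
  then have "P = 2 \<or> P = -2"
    by auto
  define s where "s = P div 2"
  have s: "P = 2 * s" "s\<^sup>2 = 1"
    using \<open>P = 2 \<or> P = -2\<close> by (auto simp: s_def)
  then have U: "lucasU P 1 j = int j * s ^ (j - 1)" for j
    using lucasU_repeated_root[of s j] by simp
  have "\<bar>s\<bar> = 1"
    using s(2) by (simp add: abs_square_eq_1)
  show "\<bar>lucasU P 1 k\<bar> = int k"
    using U[of k] \<open>\<bar>s\<bar> = 1\<close> by (simp add: abs_mult power_abs)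
  show "lucasU P 1 k * lucasU P 1 (k + 2) = int k * int (k + 2)"
  proof (cases k)
    case (Suc j)
    have "lucasU P 1 k * lucasU P 1 (k + 2) = int k * int (k + 2) * (s ^ j * s ^ Suc (Suc j))"
      using U[of k] U[of "k + 2"] Suc by (simp del: lucasU.simps add: algebra_simps)
    also have "s ^ j * s ^ Suc (Suc j) = (s\<^sup>2) ^ Suc j"
      by (simp add: power_add[symmetric] power_mult[symmetric] mult_2)
    finally show ?thesis
      using s(2) by simp
  qed simp
qed

text \<open>Vieta jumping: if \<open>(x, y)\<close> solves the quadratic form below, so does \<open>(y', x)\<close> with
  \<open>y' = (P\<^sup>2 + 2) x - y = (x\<^sup>2 + P\<^sup>2) / y\<close>, and \<open>0 < y' < x\<close> unless \<open>x = 1\<close>. The descent ends at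
  \<open>(1, P\<^sup>2 + 1) = (U\<^sub>1, U\<^sub>3)\<close>, and running it backwards is the two-step recurrence of \<open>U(P, -1)\<close>.\<close>

lemma odd_lucasU_pair_if_vieta:
  fixes P x y :: int
  assumes "0 < x" "x < y" "x\<^sup>2 + y\<^sup>2 - (P\<^sup>2 + 2) * x * y = - P\<^sup>2"
  shows "\<exists>i. x = lucasU P (-1) (2 * i + 1) \<and> y = lucasU P (-1) (2 * i + 3)"
  using assms
proof (induction "nat x" arbitrary: x y rule: less_induct)
  case less
  show ?case
  proof (cases "x = 1")
    case True
    then have "(y - 1) * (y - (P\<^sup>2 + 1)) = 0"
      using less.prems(3) by (simp add: algebra_simps power2_eq_square)
    then have "y = P\<^sup>2 + 1"
      using less.prems(2) True by auto
    then show ?thesis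
      using True by (intro exI[of _ 0]) (simp add: eval_nat_numeral power2_eq_square)
  next
    case False
    define y' where "y' = (P\<^sup>2 + 2) * x - y"
    have prod: "y * y' = x\<^sup>2 + P\<^sup>2"
      using less.prems(3) by (simp add: y'_def algebra_simps power2_eq_square)
    then have "y * y' > 0"
      using less.prems(1) by (simp add: add_pos_nonneg)
    then have y'_pos: "y' > 0"
      using less.prems by (simp add: zero_less_mult_iff)
    have "P \<noteq> 0"
    proof
      assume "P = 0"
      then have "(y - x)\<^sup>2 = 0"
        using less.prems(3) by (simp add: power2_eq_square algebra_simps)
      then show False
        using less.prems(2) by simp
    qed
    moreover have "x\<^sup>2 > 1"
      using less.prems(1) False by (simp add: one_less_power)
    ultimately have neg: "P\<^sup>2 * (1 - x\<^sup>2) < 0"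
      by (simp add: mult_pos_neg)
    have "(x - y) * (x - y') = P\<^sup>2 * (1 - x\<^sup>2)"
      using prod by (simp add: y'_def algebra_simps power2_eq_square)
    with neg have "(x - y) * (x - y') < 0"
      by simp
    then have "y' < x"
      using less.prems(2) by (simp add: mult_less_0_iff)
    moreover have "y'\<^sup>2 + x\<^sup>2 - (P\<^sup>2 + 2) * y' * x = - P\<^sup>2"
      using less.prems(3) by (simp add: y'_def algebra_simps power2_eq_square)
    ultimately obtain i where i: "y' = lucasU P (-1) (2 * i + 1)" "x = lucasU P (-1) (2 * i + 3)"
      using less.hyps[of y' x] y'_pos by auto
    have "y = (P\<^sup>2 + 2) * x - y'"
      by (simp add: y'_def)
    also have "\<dots> = lucasU P (-1) ((2 * i + 1) + 4)"
      using i lucasU_add4[of P "-1" "2 * i + 1"] by (simp del: lucasU.simps add: eval_nat_numeral)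
    finally show ?thesis
      using i(2) by (intro exI[of _ "Suc i"]) (simp del: lucasU.simps add: eval_nat_numeral)
  qed
qed

lemma prime_mult_Suc_eq_square:
  fixes p q m :: nat
  assumes p: "prime p" and q: "prime q" and "p < q" and m: "p * q + 1 = m\<^sup>2"
  shows "q = p + 2"
proof -
  have "p \<ge> 2" "q \<ge> 3"
    using prime_ge_2_nat[OF p] \<open>p < q\<close> by auto
  then have "p * q > 0"
    by simp
  then have "m\<^sup>2 > 1"
    using m by linarith
  then have "m \<ge> 2"
    by (cases m) (auto simp: power2_eq_square)
  have fac: "p * q = (m - 1) * (m + 1)"
    using m \<open>m \<ge> 2\<close> by (simp add: power2_eq_square algebra_simps)
  then have "q dvd m - 1 \<or> q dvd m + 1"
    using q prime_dvd_mult_iff by (metis dvd_triv_right)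
  then show ?thesis
  proof
    assume "q dvd m - 1"
    then have "q * q \<le> (m - 1) * (m + 1)"
      using \<open>m \<ge> 2\<close> by (intro mult_mono) (auto dest: dvd_imp_le)
    moreover have "p * q < q * q"
      using \<open>p < q\<close> \<open>q \<ge> 3\<close> by simp
    ultimately show ?thesis
      using fac by linarith
  next
    assume "q dvd m + 1"
    then obtain t where t: "m + 1 = q * t"
      by blast
    then have "p * q = (m - 1) * t * q"
      using fac by (simp add: ac_simps)
    then have "p = (m - 1) * t"
      using \<open>q \<ge> 3\<close> by simp
    then have "m - 1 dvd p"
      by simp
    then have "m - 1 = 1 \<or> m - 1 = p"
      using p prime_nat_iff by blast
    moreover have "m \<noteq> 2"
      using m \<open>p \<ge> 2\<close> \<open>q \<ge> 3\<close> mult_le_mono[of 2 p 3 q] by auto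
    ultimately have "m - 1 = p"
      using \<open>m \<ge> 2\<close> by auto
    then show ?thesis
      using t \<open>p = (m - 1) * t\<close> \<open>p \<ge> 2\<close> by auto
  qed
qed

lemma twin_primes_if_scaled_square:
  fixes P d :: int and p q :: nat
  assumes "prime p" "prime q" "p < q" "P \<noteq> 0"
    and "d\<^sup>2 = P\<^sup>2 * (int p * int q + 1)"
  shows "q = p + 2"
proof -
  have "P\<^sup>2 dvd d\<^sup>2"
    using assms(5) by simp
  then have "P dvd d"
    by simp
  then obtain t where "d = P * t"
    by blast
  then have "int (p * q + 1) = int ((nat \<bar>t\<bar>)\<^sup>2)"
    using assms(4,5) by (simp add: power_mult_distrib)
  then show ?thesis
    using prime_mult_Suc_eq_square assms(1-3) by (metis of_nat_eq_iff)
qed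

lemma divisors_prime_mult:
  fixes p q :: nat
  assumes "prime p" "prime q"
  shows "{d. d dvd p * q \<and> d > 0} = {1, p, q, p * q}"
proof (intro equalityI subsetI)
  fix d assume "d \<in> {d. d dvd p * q \<and> d > 0}"
  then obtain a b where "d = a * b" "a dvd p" "b dvd q"
    using division_decomp by blast
  moreover from this have "a = 1 \<or> a = p" "b = 1 \<or> b = q"
    using assms prime_nat_iff by blast+
  ultimately show "d \<in> {1, p, q, p * q}"
    by auto
qed (use assms prime_gt_0_nat in auto)

lemma sigma_prime:
  assumes "prime p"
  shows "sigma k p = 1 + p ^ k"
proof -
  have "{d. d dvd p \<and> d > 0} = {1, p}"
    using assms prime_nat_iff prime_gt_0_nat by auto
  then show ?thesis
    using prime_gt_1_nat[OF assms] by (simp add: sigma_def)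
qed

lemma sigma_prime_square: "prime p \<Longrightarrow> sigma k (p * p) = 1 + p ^ k + (p * p) ^ k"
  using divisors_prime_mult[of p p] prime_gt_1_nat[of p] by (simp add: sigma_def)

lemma sigma_prime_mult:
  "prime p \<Longrightarrow> prime q \<Longrightarrow> p \<noteq> q \<Longrightarrow> sigma k (p * q) = 1 + p ^ k + q ^ k + (p * q) ^ k"
  using divisors_prime_mult[of p q] prime_gt_1_nat[of p] prime_gt_1_nat[of q]
  by (simp add: sigma_def)

lemma sigma_ge_three_divisors:
  assumes "m dvd n" "1 < m" "m < n"
  shows "1 + m ^ k + n ^ k \<le> sigma k n"
proof -
  have "finite {d. d dvd n \<and> d > 0}"
    by (rule finite_subset[of _ "{..n}"]) (use assms in \<open>auto dest: dvd_imp_le\<close>)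
  moreover have "{1, m, n} \<subseteq> {d. d dvd n \<and> d > 0}"
    using assms by auto
  ultimately have "(\<Sum>d\<in>{1, m, n}. d ^ k) \<le> sigma k n"
    unfolding sigma_def by (rule sum_mono2) auto
  then show ?thesis
    using assms by simp
qed

lemma linear_le_mult_abs:
  fixes A B :: int
  assumes "n > 0"
  shows "A * int n + B \<le> (\<bar>A\<bar> + \<bar>B\<bar>) * int n"
proof -
  have "A * int n \<le> \<bar>A\<bar> * int n"
    by (rule mult_right_mono) simp_all
  moreover have "\<bar>B\<bar> * 1 \<le> \<bar>B\<bar> * int n"
    using assms by (intro mult_left_mono) simp_all
  ultimately have "A * int n + B \<le> \<bar>A\<bar> * int n + \<bar>B\<bar> * int n"
    by linarith
  then show ?thesis
    by (simp add: algebra_simps)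
qed

lemma solution_le_cube_if_least_factor:
  fixes A B :: int and n x c :: nat
  assumes n: "n = x * c" and "2 \<le> x" and "x * x \<le> c"
    and sol: "int (sigma 2 n) - int n ^ 2 = A * int n + B"
  shows "int n \<le> (\<bar>A\<bar> + \<bar>B\<bar>) ^ 3"
proof -
  define K where "K = \<bar>A\<bar> + \<bar>B\<bar>"
  have "c \<ge> 4"
    using \<open>2 \<le> x\<close> \<open>x * x \<le> c\<close> mult_le_mono[of 2 x 2 x] by linarith
  then have "1 < c" "c < n"
    using n \<open>2 \<le> x\<close> by simp_all
  then have "1 + c\<^sup>2 + n\<^sup>2 \<le> sigma 2 n"
    using n by (intro sigma_ge_three_divisors) simp_all
  then have "int (1 + c\<^sup>2 + n\<^sup>2) \<le> int (sigma 2 n)"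
    by (simp only: of_nat_le_iff)
  then have "1 + int c ^ 2 \<le> A * int n + B"
    using sol by simp
  also have "\<dots> \<le> K * int n"
    unfolding K_def using \<open>c < n\<close> by (intro linear_le_mult_abs) simp
  finally have "int c * int c < (K * int x) * int c"
    using n by (simp add: power2_eq_square algebra_simps)
  then have cK: "int c < K * int x"
    by (simp add: mult_less_cancel_right)
  moreover have "int x * int x \<le> int c"
    using \<open>x * x \<le> c\<close> by (metis of_nat_le_iff of_nat_mult)
  ultimately have "int x * int x < K * int x"
    by linarith
  then have "int x < K"
    using \<open>2 \<le> x\<close> by (simp add: mult_less_cancel_right)
  have "int n = int x * int c"
    using n by simp
  also have "\<dots> \<le> int x * (K * int x)"
    using cK by (intro mult_left_mono) simp_all
  also have "\<dots> = K * (int x * int x)"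
    by (simp add: algebra_simps)
  also have "\<dots> \<le> K * (K * K)"
    using \<open>int x < K\<close> by (intro mult_left_mono mult_mono) (auto simp: K_def)
  finally show ?thesis
    by (simp add: K_def power3_eq_cube)
qed

lemma solution_le_cube_if_three_factors:
  fixes A B :: int and n x y z :: nat
  assumes n: "n = x * y * z" and "2 \<le> x" "2 \<le> y" "2 \<le> z"
    and sol: "int (sigma 2 n) - int n ^ 2 = A * int n + B"
  shows "int n \<le> (\<bar>A\<bar> + \<bar>B\<bar>) ^ 3"
proof -
  have "\<exists>u c. n = u * c \<and> 2 \<le> u \<and> u * u \<le> c"
  proof -
    consider "x \<le> y" "x \<le> z" | "y \<le> x" "y \<le> z" | "z \<le> x" "z \<le> y"
      by linarith
    then show ?thesis
    proof cases
      case 1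
      then have "x * x \<le> y * z"
        by (rule mult_mono) simp_all
      then show ?thesis
        using n \<open>2 \<le> x\<close> by (metis mult.assoc)
    next
      case 2
      then have "y * y \<le> x * z"
        by (rule mult_mono) simp_all
      then show ?thesis
        using n \<open>2 \<le> y\<close> by (metis mult.assoc mult.commute)
    next
      case 3
      then have "z * z \<le> x * y"
        by (rule mult_mono) simp_all
      then show ?thesis
        using n \<open>2 \<le> z\<close> by (metis mult.commute)
    qed
  qed
  then show ?thesis
    using solution_le_cube_if_least_factor sol by blast
qed

lemma not_prime_factorE:
  fixes n :: nat
  assumes "n \<ge> 2" "\<not> prime n"
  obtains a b where "n = a * b" "2 \<le> a" "2 \<le> b"
proof -
  obtain a where "a dvd n" "a \<noteq> 1" "a \<noteq> n"
    using assms prime_nat_iff by auto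
  moreover from \<open>a dvd n\<close> obtain b where "n = a * b"
    by blast
  ultimately show ?thesis
    using assms(1) that[of a b] by (cases a; cases b) auto
qed

lemma prime_or_semiprime_if_no_three_factors:
  fixes n :: nat
  assumes "n \<ge> 2" and no3: "\<nexists>x y z. n = x * y * z \<and> 2 \<le> x \<and> 2 \<le> y \<and> 2 \<le> z"
  shows "prime n \<or> (\<exists>p. prime p \<and> n = p * p) \<or> (\<exists>p q. prime p \<and> prime q \<and> p < q \<and> n = p * q)"
proof (cases "prime n")
  case False
  then obtain a b where ab: "n = a * b" "2 \<le> a" "2 \<le> b"
    using assms(1) not_prime_factorE by blast
  have "prime a"
  proof (rule ccontr)
    assume "\<not> prime a"
    then obtain c d where "a = c * d" "2 \<le> c" "2 \<le> d"
      using ab(2) not_prime_factorE by blast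
    then show False
      using no3 ab by blast
  qed
  moreover have "prime b"
  proof (rule ccontr)
    assume "\<not> prime b"
    then obtain c d where "b = c * d" "2 \<le> c" "2 \<le> d"
      using ab(3) not_prime_factorE by blast
    then show False
      using no3 ab by (metis mult.assoc)
  qed
  ultimately show ?thesis
    using ab(1) by (metis linorder_neqE_nat mult.commute)
qed simp

lemma large_solution_cases:
  fixes A B :: int and n :: nat
  assumes sol: "int (sigma 2 n) - int n ^ 2 = A * int n + B"
    and big: "int n > (\<bar>A\<bar> + \<bar>B\<bar>) ^ 3" and "A \<noteq> 0 \<or> B \<noteq> 0"
  obtains (prime) "prime n" "A * int n + B = 1"
  | (square) p where "prime p" "n = p * p" "A * int p ^ 2 + B = 1 + int p ^ 2"
  | (semiprime) p q where "prime p" "prime q" "p < q" "n = p * q"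
      "A * (int p * int q) + B = 1 + int p ^ 2 + int q ^ 2"
proof -
  have "1 \<le> (\<bar>A\<bar> + \<bar>B\<bar>) ^ 3"
    using assms(3) by (intro one_le_power) auto
  then have "n \<ge> 2"
    using big by linarith
  moreover have "\<nexists>x y z. n = x * y * z \<and> 2 \<le> x \<and> 2 \<le> y \<and> 2 \<le> z"
    using solution_le_cube_if_three_factors[OF _ _ _ _ sol] big by fastforce
  ultimately consider "prime n" | p where "prime p" "n = p * p"
    | p q where "prime p" "prime q" "p < q" "n = p * q"
    using prime_or_semiprime_if_no_three_factors by blast
  then show ?thesis
  proof cases
    case 1
    then show ?thesis
      using sol prime by (simp add: sigma_prime)
  next
    case (2 p)
    then show ?thesis
      using sol square by (simp add: sigma_prime_square power2_eq_square)
  next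
    case (3 p q)
    then show ?thesis
      using sol semiprime by (simp add: sigma_prime_mult power2_eq_square)
  qed
qed

lemma mult_add_one_neq_mult:
  fixes Z c m :: int
  assumes "0 \<le> Z" "0 < c" "c \<le> m"
  shows "Z * (m + 1) \<noteq> c * m"
proof
  assume eq: "Z * (m + 1) = c * m"
  show False
  proof (cases "Z < c")
    case True
    then have "(c - Z) * m \<ge> 1 * m"
      using assms by (intro mult_right_mono) auto
    then show False
      using eq assms True by (simp add: algebra_simps)
  next
    case False
    then have "Z * (m + 1) \<ge> c * (m + 1)"
      using assms by (intro mult_right_mono) auto
    then show False
      using eq assms by (simp add: algebra_simps)
  qed
qed

lemma large_solution_odd_lucas:
  fixes P A B :: int and n :: nat
  assumes sol: "int (sigma 2 n) - int n ^ 2 = A * int n + B"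
    and big: "int n > (\<bar>A\<bar> + \<bar>B\<bar>) ^ 3" and A: "A = P\<^sup>2 + 2" and B: "B = 1 - P\<^sup>2"
  shows "\<exists>k. k \<ge> 1 \<and> int n = lucasU P (-1) (2 * k - 1) * lucasU P (-1) (2 * k + 1)
           \<and> prime \<bar>lucasU P (-1) (2 * k - 1)\<bar> \<and> prime \<bar>lucasU P (-1) (2 * k + 1)\<bar>"
proof -
  have nonzero: "A \<noteq> 0 \<or> B \<noteq> 0"
    using A zero_le_power2[of P] by linarith
  from sol big nonzero show ?thesis
  proof (cases rule: large_solution_cases)
    case prime
    then have "P\<^sup>2 * (int n - 1) + 2 * int n = 0" and "int n \<ge> 2"
      using A B prime_ge_2_nat by (simp_all add: algebra_simps)
    moreover have "P\<^sup>2 * (int n - 1) \<ge> 0"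
      using \<open>int n \<ge> 2\<close> by simp
    ultimately show ?thesis
      by linarith
  next
    case (square p)
    then have "P\<^sup>2 * (int p ^ 2 - 1) + int p ^ 2 = 0"
      using A B by (simp add: algebra_simps)
    moreover have "int p ^ 2 \<ge> 1"
      using prime_gt_0_nat[OF \<open>prime p\<close>] by simp
    moreover have "P\<^sup>2 * (int p ^ 2 - 1) \<ge> 0"
      using \<open>int p ^ 2 \<ge> 1\<close> by (intro mult_nonneg_nonneg zero_le_power2) linarith
    ultimately show ?thesis
      by linarith
  next
    case (semiprime p q)
    then have "int p ^ 2 + int q ^ 2 - (P\<^sup>2 + 2) * int p * int q = - P\<^sup>2"
      using A B by (simp add: algebra_simps)
    then obtain i where p: "int p = lucasU P (-1) (2 * i + 1)" and q: "int q = lucasU P (-1) (2 * i + 3)"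
      using odd_lucasU_pair_if_vieta semiprime prime_gt_0_nat by (metis of_nat_0_less_iff of_nat_less_iff)
    have idx: "2 * Suc i - 1 = 2 * i + 1" "2 * Suc i + 1 = 2 * i + 3"
      by simp_all
    show ?thesis
    proof (intro exI[of _ "Suc i"])
      show "Suc i \<ge> 1 \<and> int n = lucasU P (-1) (2 * Suc i - 1) * lucasU P (-1) (2 * Suc i + 1)
          \<and> prime \<bar>lucasU P (-1) (2 * Suc i - 1)\<bar> \<and> prime \<bar>lucasU P (-1) (2 * Suc i + 1)\<bar>"
        unfolding idx p[symmetric] q[symmetric] using semiprime by simp
    qed
  qed
qed

lemma no_large_solution_even_lucas:
  fixes P A B :: int and n :: nat
  assumes sol: "int (sigma 2 n) - int n ^ 2 = A * int n + B"
    and big: "int n > (\<bar>A\<bar> + \<bar>B\<bar>) ^ 3" and A: "A = P\<^sup>2 + 2" and B: "B = P\<^sup>2 + 1"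
  shows False
proof -
  have nonzero: "A \<noteq> 0 \<or> B \<noteq> 0"
    using A zero_le_power2[of P] by linarith
  from sol big nonzero show ?thesis
  proof (cases rule: large_solution_cases)
    case prime
    then have "(P\<^sup>2 + 2) * int n + P\<^sup>2 = 0"
      using A B by (simp add: algebra_simps)
    moreover have "0 < (P\<^sup>2 + 2) * int n"
      using prime_gt_0_nat[OF \<open>prime n\<close>] by (intro mult_pos_pos) (simp_all add: add_nonneg_pos)
    ultimately show ?thesis
      using zero_le_power2[of P] by linarith
  next
    case (square p)
    then have "(P\<^sup>2 + 1) * int p ^ 2 + P\<^sup>2 = 0"
      using A B by (simp add: algebra_simps)
    moreover have "0 < (P\<^sup>2 + 1) * int p ^ 2"
      using prime_gt_0_nat[OF \<open>prime p\<close>] by (intro mult_pos_pos) (simp_all add: add_nonneg_pos)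
    ultimately show ?thesis
      using zero_le_power2[of P] by linarith
  next
    case (semiprime p q)
    then have sq: "(int q - int p)\<^sup>2 = P\<^sup>2 * (int p * int q + 1)"
      using A B by (simp add: algebra_simps power2_eq_square)
    with \<open>p < q\<close> have "P \<noteq> 0"
      by auto
    then have "q = p + 2" and "P\<^sup>2 \<ge> 1"
      using sq semiprime twin_primes_if_scaled_square by (auto simp: int_one_le_iff_zero_less)
    then have "4 = P\<^sup>2 * (int p + 1)\<^sup>2"
      using sq by (simp add: algebra_simps power2_eq_square)
    moreover have "(int p + 1)\<^sup>2 \<ge> 3\<^sup>2"
      using prime_ge_2_nat[OF \<open>prime p\<close>] by (intro power_mono) auto
    ultimately show False
      using \<open>P\<^sup>2 \<ge> 1\<close> mult_mono[of 1 "P\<^sup>2" 9 "(int p + 1)\<^sup>2"] by simp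
  qed
qed

lemma large_solution_twin_primes:
  fixes P A B :: int and n :: nat
  assumes sol: "int (sigma 2 n) - int n ^ 2 = A * int n + B"
    and big: "int n > (\<bar>A\<bar> + \<bar>B\<bar>) ^ 3" and A: "A = P\<^sup>2 - 2" and B: "B = P\<^sup>2 + 1"
  shows "\<exists>k. k \<ge> 1 \<and> int n = lucasU P 1 (k - 1) * lucasU P 1 (k + 1)
           \<and> prime \<bar>lucasU P 1 (k - 1)\<bar> \<and> prime \<bar>lucasU P 1 (k + 1)\<bar>"
proof -
  have nonzero: "A \<noteq> 0 \<or> B \<noteq> 0"
    using B zero_le_power2[of P] by linarith
  from sol big nonzero show ?thesis
  proof (cases rule: large_solution_cases)
    case prime
    then have "P\<^sup>2 * (int n + 1) = 2 * int n"
      using A B by (simp add: algebra_simps)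
    moreover have "int n \<ge> 2"
      using prime prime_ge_2_nat by simp
    ultimately show ?thesis
      using mult_add_one_neq_mult[of "P\<^sup>2" 2 "int n"] by simp
  next
    case (square p)
    then have "P\<^sup>2 * (int p ^ 2 + 1) = 3 * int p ^ 2"
      using A B by (simp add: algebra_simps)
    moreover have "int p ^ 2 \<ge> 2\<^sup>2"
      using prime_ge_2_nat[OF \<open>prime p\<close>] by (intro power_mono) auto
    ultimately show ?thesis
      using mult_add_one_neq_mult[of "P\<^sup>2" 3 "int p ^ 2"] by simp
  next
    case (semiprime p q)
    then have sq: "(int p + int q)\<^sup>2 = P\<^sup>2 * (int p * int q + 1)"
      using A B by (simp add: algebra_simps power2_eq_square)
    with semiprime have "P \<noteq> 0"
      using prime_gt_0_nat by fastforce
    then have "q = p + 2"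
      using sq semiprime twin_primes_if_scaled_square by blast
    then have "4 * (int p + 1)\<^sup>2 = P\<^sup>2 * (int p + 1)\<^sup>2"
      using sq by (simp add: algebra_simps power2_eq_square)
    then have P: "P\<^sup>2 = 4"
      by simp
    have "p + 1 - 1 = p" "p + 1 + 1 = p + 2"
      by simp_all
    moreover have "prime \<bar>lucasU P 1 p\<bar>" "prime \<bar>lucasU P 1 (p + 2)\<bar>"
      unfolding lucasU_square_four(1)[OF P] using semiprime \<open>q = p + 2\<close>
      by (simp_all only: prime_nat_int_transfer)
    ultimately show ?thesis
      using semiprime \<open>q = p + 2\<close> lucasU_square_four(2)[OF P, of p]
      by (intro exI[of _ "p + 1"]) (simp del: lucasU.simps add: algebra_simps)
  qed
qed

theorem theorem1p1:
  fixes P A B :: int and n :: nat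
  assumes npos: "n > 0"
    and sol: "int (sigma 2 n) - int n ^ 2 = A * int n + B"
    and big: "int n > (\<bar>A\<bar> + \<bar>B\<bar>) ^ 3"
  shows "(A = P^2 + 2 \<and> B = 1 - P^2 \<longrightarrow>
            (\<exists>k::nat. k \<ge> 1 \<and> int n = lucasU P (-1) (2*k-1) * lucasU P (-1) (2*k+1)
               \<and> prime \<bar>lucasU P (-1) (2*k-1)\<bar> \<and> prime \<bar>lucasU P (-1) (2*k+1)\<bar>))
       \<and> (A = P^2 + 2 \<and> B = P^2 + 1 \<longrightarrow>
            (\<exists>k::nat. int n = lucasU P (-1) (2*k) * lucasU P (-1) (2*k+2)
               \<and> prime \<bar>lucasU P (-1) (2*k)\<bar> \<and> prime \<bar>lucasU P (-1) (2*k+2)\<bar>))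
       \<and> (A = P^2 - 2 \<and> B = P^2 + 1 \<longrightarrow>
            (\<exists>k::nat. k \<ge> 1 \<and> int n = lucasU P 1 (k-1) * lucasU P 1 (k+1)
               \<and> prime \<bar>lucasU P 1 (k-1)\<bar> \<and> prime \<bar>lucasU P 1 (k+1)\<bar>))"
  \<comment> \<open>\<open>npos\<close> is implied by \<open>big\<close>.\<close>
  using large_solution_odd_lucas[OF sol big, of P] no_large_solution_even_lucas[OF sol big, of P]
    large_solution_twin_primes[OF sol big, of P]
  by blast

end
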